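(* Let $\mathcal{L}:\mathbb{R}^p\to\mathbb{R}$ be continuously differentiable, let $\theta_0\in\mathbb{R}^p$, and let $\mathcal{B}(\theta_0)\subseteq\mathbb{R}^p$ be a non-empty set containing $\theta_0$. Let $(\theta_t)_{t\ge 0}$ be generated by gradient descent $\theta_{t+1}=\theta_t-\eta_t\nabla_\theta\mathcal{L}(\theta_t)$, and assume all iterates $\theta_t$, $t\ge1$, lie in $\mathcal{B}(\theta_0)$. Fix a step $t$ and suppose: (RSC condition) there is a non-empty set $\mathcal{N}_t$ such that (a) $\mathcal{N}_t\subseteq\mathcal{B}(\theta_0)$; (b) either (b.1) $\theta_{t+1}\in\mathcal{N}_t$ and either $\theta_t\notin\mathcal{N}_t$ or $\mathcal{L}(\theta_t)\ne\inf_{\theta\in\mathcal{N}_t}\mathcal{L}(\theta)$, or (b.2) there exists $\theta'\in\mathcal{N}_t$ with $\mathcal{L}(\theta')<\mathcal{L}(\theta_t)$; and (c) $\mathcal{L}$ satisfies $\alpha_t$-restricted strong convexity with respect to $(\mathcal{N}_t,\theta_t)$ for some $\alpha_t>0$; (Smoothness condition) $\mathcal{L}$ is $\beta$-smooth on $\mathcal{B}(\theta_0)$ for some $\beta>0$, i.e. $\mathcal{L}(\theta')\le\mathcal{L}(\theta)+\langle\theta'-\theta,\nabla_\theta\mathcal{L}(\theta)\rangle+\frac{\beta}{2}\|\theta'-\theta\|_2^2$ for all $\theta,\theta'\in\mathcal{B}(\theta_0)$. Assume $\alpha_t\le\beta$ and $\eta_t=\omega_t/\beta$ for some $\omega_t\in(0,2)$.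 If $\mathcal{L}(\theta_t)\ne\inf_{\theta\in\mathcal{B}(\theta_0)}\mathcal{L}(\theta)$, then $$0\le\gamma_t:=\frac{\inf_{\theta\in\mathcal{N}_t}\mathcal{L}(\theta)-\inf_{\theta\in\mathcal{B}(\theta_0)}\mathcal{L}(\theta)}{\mathcal{L}(\theta_t)-\inf_{\theta\in\mathcal{B}(\theta_0)}\mathcal{L}(\theta)}<1$$ and $$\mathcal{L}(\theta_{t+1})-\inf_{\theta\in\mathcal{B}(\theta_0)}\mathcal{L}(\theta)\le\Big(1-\frac{\alpha_t\omega_t(1-\gamma_t)}{\beta}(2-\omega_t)\Big)\Big(\mathcal{L}(\theta_t)-\inf_{\theta\in\mathcal{B}(\theta_0)}\mathcal{L}(\theta)\Big).$$
   Context: A function $\mathcal{L}$ satisfies $\alpha$-restricted strong convexity ($\alpha$-RSC) with respect to a tuple $(\mathcal{S},\theta)$, where $\mathcal{S}\subseteq\mathbb{R}^p$ and $\theta\in\mathbb{R}^p$ is fixed, if $\alpha>0$ and for every $\theta'\in\mathcal{S}$: $\mathcal{L}(\theta')\ge\mathcal{L}(\theta)+\langle\theta'-\theta,\nabla_\theta\mathcal{L}(\theta)\rangle+\frac{\alpha}{2}\|\theta'-\theta\|_2^2$. *)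

theory Defs
  imports "HOL-Analysis.Analysis"
begin

definition rsc :: "('a::real_inner \<Rightarrow> real) \<Rightarrow> ('a \<Rightarrow> 'a) \<Rightarrow> real \<Rightarrow> 'a set \<Rightarrow> 'a \<Rightarrow> bool" where
  "rsc L gL \<alpha> S th \<longleftrightarrow> \<alpha> > 0 \<and>
     (\<forall>th'\<in>S. L th' \<ge> L th + inner (th' - th) (gL th) + \<alpha> / 2 * (norm (th' - th))\<^sup>2)"

definition beta_smooth :: "('a::real_inner \<Rightarrow> real) \<Rightarrow> ('a \<Rightarrow> 'a) \<Rightarrow> real \<Rightarrow> 'a set \<Rightarrow> bool" where
  "beta_smooth L gL \<beta> B \<longleftrightarrow>
     (\<forall>th\<in>B. \<forall>th'\<in>B. L th' \<le> L th + inner (th' - th) (gL th) + \<beta> / 2 * (norm (th' - th))\<^sup>2)"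

end

theory Submission
  imports Defs
begin

text \<open>Smoothness turns the step of length \<open>\<omega>/\<beta>\<close> into a decrease of \<open>\<omega>(2-\<omega>)/(2\<beta>) \<parallel>\<nabla>L\<parallel>\<^sup>2\<close>.
  Minimising the RSC lower bound over the displacement gives the Polyak-Lojasiewicz type bound
  \<open>\<parallel>\<nabla>L(\<theta>\<^sub>t)\<parallel>\<^sup>2 \<ge> 2\<alpha> (L(\<theta>\<^sub>t) - inf\<^sub>N L)\<close>, and \<open>L(\<theta>\<^sub>t) - inf\<^sub>N L = (1-\<gamma>)(L(\<theta>\<^sub>t) - inf\<^sub>B L)\<close>
  by the definition of \<open>\<gamma>\<close>. Condition (b) only serves to make \<open>inf\<^sub>N L < L(\<theta>\<^sub>t)\<close>, i.e. \<open>\<gamma> < 1\<close>.\<close>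

lemma gradient_step_decrease:
  fixes x y g :: "'a::real_inner"
  assumes upper: "L y \<le> L x + inner (y - x) g + \<beta> / 2 * (norm (y - x))\<^sup>2"
    and y: "y = x - (\<omega> / \<beta>) *\<^sub>R g"
    and "\<beta> > 0"
  shows "L y \<le> L x - \<omega> * (2 - \<omega>) / (2 * \<beta>) * (norm g)\<^sup>2"
proof -
  have step: "y - x = - (\<omega> / \<beta>) *\<^sub>R g" by (simp add: y)
  have "inner (y - x) g = - (\<omega> / \<beta>) * (norm g)\<^sup>2"
    unfolding step by (simp add: power2_norm_eq_inner)
  moreover have "(norm (y - x))\<^sup>2 = (\<omega> / \<beta>)\<^sup>2 * (norm g)\<^sup>2"
    unfolding step by (simp add: power_mult_distrib power_divide)
  ultimately have "L x + inner (y - x) g + \<beta> / 2 * (norm (y - x))\<^sup>2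
      = L x - \<omega> * (2 - \<omega>) / (2 * \<beta>) * (norm g)\<^sup>2"
    using \<open>\<beta> > 0\<close> by (simp add: field_simps power2_eq_square)
  with upper show ?thesis by linarith
qed

lemma gradient_step_descent_or_fixed:
  fixes x y g :: "'a::real_inner"
  assumes upper: "L y \<le> L x + inner (y - x) g + \<beta> / 2 * (norm (y - x))\<^sup>2"
    and y: "y = x - (\<omega> / \<beta>) *\<^sub>R g"
    and "\<beta> > 0" "0 < \<omega>" "\<omega> < 2"
  shows "L y < L x \<or> y = x"
proof (cases "g = 0")
  case False
  have "\<omega> * (2 - \<omega>) / (2 * \<beta>) * (norm g)\<^sup>2 > 0"
    using False assms(3-5) by simp
  then show ?thesis
    using gradient_step_decrease[OF upper y \<open>\<beta> > 0\<close>] by linarith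
qed (simp add: y)

lemma inner_add_norm_square_ge:
  fixes v g :: "'a::real_inner"
  assumes "\<alpha> > 0"
  shows "- (norm g)\<^sup>2 / (2 * \<alpha>) \<le> inner v g + \<alpha> / 2 * (norm v)\<^sup>2"
proof -
  have "0 \<le> (norm (\<alpha> *\<^sub>R v + g))\<^sup>2" by simp
  also have "\<dots> = \<alpha>\<^sup>2 * (norm v)\<^sup>2 + 2 * \<alpha> * inner v g + (norm g)\<^sup>2"
    unfolding power2_norm_eq_inner by (simp add: inner_add_left inner_add_right inner_commute
        power2_eq_square algebra_simps)
  finally show ?thesis
    using assms by (simp add: field_simps power2_eq_square)
qed

lemma rsc_INF_lower_bound:
  assumes rsc: "rsc L gL \<alpha> S x" and "S \<noteq> {}"
  shows "L x - (norm (gL x))\<^sup>2 / (2 * \<alpha>) \<le> (INF z\<in>S. L z)"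
proof (rule cINF_greatest[OF \<open>S \<noteq> {}\<close>])
  fix z assume "z \<in> S"
  then have "L x + inner (z - x) (gL x) + \<alpha> / 2 * (norm (z - x))\<^sup>2 \<le> L z"
    using rsc unfolding rsc_def by blast
  moreover have "\<alpha> > 0" using rsc unfolding rsc_def by simp
  ultimately show "L x - (norm (gL x))\<^sup>2 / (2 * \<alpha>) \<le> L z"
    using inner_add_norm_square_ge[of \<alpha> "gL x" "z - x"] by linarith
qed

lemma INF_less_of_descent:
  fixes L :: "'a \<Rightarrow> 'b::conditionally_complete_linorder"
  assumes bdd: "bdd_below (L ` N)"
    and descent: "L y < L x \<or> y = x"
    and cond: "(y \<in> N \<and> (x \<notin> N \<or> L x \<noteq> (INF z\<in>N. L z))) \<or> (\<exists>z\<in>N. L z < L x)"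
  shows "(INF z\<in>N. L z) < L x"
  using cond
proof
  assume y: "y \<in> N \<and> (x \<notin> N \<or> L x \<noteq> (INF z\<in>N. L z))"
  then have "(INF z\<in>N. L z) \<le> L y"
    by (blast intro: cINF_lower[OF bdd])
  with descent y show ?thesis
    by (auto simp: order.strict_iff_order)
next
  assume "\<exists>z\<in>N. L z < L x"
  then show ?thesis
    by (meson cINF_lower[OF bdd] order.strict_trans1)
qed

lemma linear_rate_from_gaps:
  fixes Lx Ly m M G \<alpha> \<beta> \<omega> :: real
  assumes "M \<le> m" "m < Lx"
    and decrease: "Ly \<le> Lx - \<omega> * (2 - \<omega>) / (2 * \<beta>) * G"
    and PL: "Lx - G / (2 * \<alpha>) \<le> m"
    and "\<alpha> > 0" "\<beta> > 0" "0 < \<omega>" "\<omega> < 2"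
  shows "let \<gamma> = (m - M) / (Lx - M)
         in 0 \<le> \<gamma> \<and> \<gamma> < 1 \<and> Ly - M \<le> (1 - \<alpha> * \<omega> * (1 - \<gamma>) / \<beta> * (2 - \<omega>)) * (Lx - M)"
proof -
  define \<gamma> where "\<gamma> = (m - M) / (Lx - M)"
  have gap: "Lx - M > 0" using assms(1,2) by linarith
  have "0 \<le> \<gamma>" "\<gamma> < 1"
    unfolding \<gamma>_def using assms(1,2) gap by simp_all
  have G: "2 * \<alpha> * (Lx - m) \<le> G"
    using PL \<open>\<alpha> > 0\<close> by (simp add: field_simps)
  have "0 \<le> \<omega> * (2 - \<omega>) / (2 * \<beta>)"
    using assms(6-8) by simp
  then have "\<omega> * (2 - \<omega>) / (2 * \<beta>) * (2 * \<alpha> * (Lx - m)) \<le> \<omega> * (2 - \<omega>) / (2 * \<beta>) * G"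
    by (rule mult_left_mono[OF G])
  then have "Ly \<le> Lx - \<omega> * (2 - \<omega>) / (2 * \<beta>) * (2 * \<alpha> * (Lx - m))"
    using decrease by linarith
  also have "Lx - m = (1 - \<gamma>) * (Lx - M)"
    unfolding \<gamma>_def using gap by (simp add: field_simps)
  finally have "Ly - M \<le> (1 - \<alpha> * \<omega> * (1 - \<gamma>) / \<beta> * (2 - \<omega>)) * (Lx - M)"
    using \<open>\<beta> > 0\<close> by (simp add: field_simps)
  with \<open>0 \<le> \<gamma>\<close> \<open>\<gamma> < 1\<close> show ?thesis
    unfolding \<gamma>_def Let_def by blast
qed

theorem theorem1:
  fixes L :: "'p::euclidean_space \<Rightarrow> real"
    and gL :: "'p \<Rightarrow> 'p"
    and B N :: "'p set"
    and th :: "nat \<Rightarrow> 'p"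
    and \<eta> :: "nat \<Rightarrow> real"
    and th0 :: 'p
    and t :: nat
    and \<alpha> \<beta> \<omega> :: real
  assumes grad: "\<And>x. GDERIV L x :> gL x"
    and grad_cont: "continuous_on UNIV gL"
    and B0: "th0 \<in> B"
    and init: "th 0 = th0"
    and gd: "\<And>n. th (Suc n) = th n - \<eta> n *\<^sub>R gL (th n)"
    and inB: "\<And>n. n \<ge> 1 \<Longrightarrow> th n \<in> B"
    and bdd: "bdd_below (L ` B)"
    and N_ne: "N \<noteq> {}"
    and N_sub: "N \<subseteq> B"
    and N_b: "(th (Suc t) \<in> N \<and> (th t \<notin> N \<or> L (th t) \<noteq> (INF x\<in>N. L x)))
              \<or> (\<exists>th'\<in>N. L th' < L (th t))"
    and RSC: "rsc L gL \<alpha> N (th t)"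
    and \<beta>_pos: "\<beta> > 0"
    and smooth: "beta_smooth L gL \<beta> B"
    and \<alpha>\<beta>: "\<alpha> \<le> \<beta>"
    and \<omega>: "0 < \<omega>" "\<omega> < 2"
    and step: "\<eta> t = \<omega> / \<beta>"
    and notopt: "L (th t) \<noteq> (INF x\<in>B. L x)"
  shows "let \<gamma> = ((INF x\<in>N. L x) - (INF x\<in>B. L x)) / (L (th t) - (INF x\<in>B. L x))
         in 0 \<le> \<gamma> \<and> \<gamma> < 1 \<and>
            L (th (Suc t)) - (INF x\<in>B. L x)
              \<le> (1 - \<alpha> * \<omega> * (1 - \<gamma>) / \<beta> * (2 - \<omega>)) * (L (th t) - (INF x\<in>B. L x))"
proof -
  have "th t \<in> B" using inB B0 init by (cases t) auto
  then have upper: "L (th (Suc t)) \<le> L (th t) + inner (th (Suc t) - th t) (gL (th t))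
                      + \<beta> / 2 * (norm (th (Suc t) - th t))\<^sup>2"
    using smooth inB[of "Suc t"] unfolding beta_smooth_def by simp
  have next_iterate: "th (Suc t) = th t - (\<omega> / \<beta>) *\<^sub>R gL (th t)"
    using gd[of t] step by simp
  have bdd_N: "bdd_below (L ` N)"
    using bdd N_sub by (meson bdd_below_mono image_mono)
  have "(INF x\<in>B. L x) \<le> (INF x\<in>N. L x)"
    using cINF_superset_mono[OF N_ne bdd N_sub] by blast
  moreover have "(INF x\<in>N. L x) < L (th t)"
    using INF_less_of_descent[OF bdd_N _ N_b]
      gradient_step_descent_or_fixed[OF upper next_iterate \<beta>_pos \<omega>] by blast
  moreover have "\<alpha> > 0" using RSC unfolding rsc_def by simp
  ultimately show ?thesis
    using linear_rate_from_gaps gradient_step_decrease[OF upper next_iterate \<beta>_pos]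
      rsc_INF_lower_bound[OF RSC N_ne] \<beta>_pos \<omega> by blast
qed

end
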